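(* In the setting of the context, assume $q<q_c$. Then $\lim_{\hat q\to q,\ \hat q\in[0,q_c)}\hat P=P$, where $P$ and $\hat P$ are the positive definite solutions of the modified Riccati equations with parameters $q$ and $\hat q$ respectively.
   Context: Let $A\in\mathbb{R}^{n\times n}$, $B\in\mathbb{R}^{n\times m}$ with $(A,B)$ stabilizable, and let $Q$, $R$ be symmetric positive definite, and $q\in(0,1)$. For $p\in[0,1)$ the modified Riccati equation with parameter $p$ is $X=Q+A^\top XA-(1-p)A^\top XB(R+B^\top XB)^{-1}B^\top XA$; $q_c$ is the critical loss probability such that for every $p\in[0,q_c)$ this equation has a unique positive definite solution. *)

theory Defs
  imports "HOL-Analysis.Analysis"
begin

definition sym_mat :: "real^'n^'n \<Rightarrow> bool" where
  "sym_mat M \<longleftrightarrow> transpose M = M"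

definition pos_def :: "real^'n^'n \<Rightarrow> bool" where
  "pos_def M \<longleftrightarrow> sym_mat M \<and> (\<forall>x. x \<noteq> 0 \<longrightarrow> x \<bullet> (M *v x) > 0)"

definition cmat :: "real^'m^'n \<Rightarrow> complex^'m^'n" where
  "cmat M = (\<chi> i j. complex_of_real (M $ i $ j))"

definition schur_stable :: "real^'n^'n \<Rightarrow> bool" where
  "schur_stable M \<longleftrightarrow>
     (\<forall>(l::complex) (v::complex^'n). v \<noteq> 0 \<and> cmat M *v v = l *s v \<longrightarrow> cmod l < 1)"

definition stabilizable :: "real^'n^'n \<Rightarrow> real^'m^'n \<Rightarrow> bool" where
  "stabilizable A B \<longleftrightarrow> (\<exists>K :: real^'n^'m. schur_stable (A + B ** K))"

text \<open>Modified algebraic Riccati equation with loss parameter p.\<close>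
definition mare :: "real^'n^'n \<Rightarrow> real^'m^'n \<Rightarrow> real^'n^'n \<Rightarrow> real^'m^'m \<Rightarrow> real
                    \<Rightarrow> real^'n^'n \<Rightarrow> bool" where
  "mare A B Q R p X \<longleftrightarrow>
     X = Q + transpose A ** X ** A
         - (1 - p) *\<^sub>R (transpose A ** X ** B ** matrix_inv (R + transpose B ** X ** B)
                          ** transpose B ** X ** A)"

text \<open>The positive definite solution (meaningful when it exists uniquely).\<close>
definition mare_sol :: "real^'n^'n \<Rightarrow> real^'m^'n \<Rightarrow> real^'n^'n \<Rightarrow> real^'m^'m \<Rightarrow> real
                    \<Rightarrow> real^'n^'n" where
  "mare_sol A B Q R p = (THE X. pos_def X \<and> mare A B Q R p X)"

end

theory Submission
  imports Defs
begin

text \<open>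
  Completing the square shows that a positive semidefinite solution \<open>X\<close> of the modified Riccati
  equation with parameter \<open>p\<close> satisfies
  \<open>x'Xx = x'Qx + p (Ax)'X(Ax) + (1 - p) min\<^sub>v ((Ax + Bv)'X(Ax + Bv) + v'Rv)\<close>,
  the minimum being attained at the LQR feedback \<open>v = K\<^sub>X x\<close>.
  Hence every solution dominates \<open>Q\<close>, and comparing the solutions \<open>X\<close> for \<open>p\<close> and \<open>Y\<close> for
  \<open>p' \<ge> p\<close> along the feedback \<open>K\<^sub>Y\<close> shows that \<open>Y - X\<close> is superharmonic for a
  Markov-type operator for which \<open>x'Yx\<close> is a strict Lyapunov function, whence \<open>X \<le> Y\<close>.
  So for \<open>q < b < q\<^sub>c\<close> all solutions with parameter in \<open>[0, b]\<close> lie in the compact Loewner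
  interval \<open>[Q, P\<^sub>b]\<close>. There the graph of \<open>p \<mapsto> P\<^sub>p\<close> is the fixed-point set of the
  continuous Riccati map, by uniqueness of the positive definite solution; a map into a compact
  set with closed graph is continuous.
\<close>

definition quad_form :: "real^'n^'n \<Rightarrow> real^'n \<Rightarrow> real" where
  "quad_form M x = x \<bullet> (M *v x)"

definition pos_semidef :: "real^'n^'n \<Rightarrow> bool" where
  "pos_semidef M \<longleftrightarrow> sym_mat M \<and> (\<forall>x. 0 \<le> quad_form M x)"

lemma pos_def_iff_quad_form:
  "pos_def M \<longleftrightarrow> sym_mat M \<and> (\<forall>x. x \<noteq> 0 \<longrightarrow> 0 < quad_form M x)"
  by (simp add: pos_def_def quad_form_def)

lemma pos_def_imp_pos_semidef: "pos_def M \<Longrightarrow> pos_semidef M"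
  unfolding pos_def_iff_quad_form pos_semidef_def
  by (metis order_less_imp_le order_refl inner_zero_left quad_form_def)

lemma quad_form_add: "quad_form (M + N) x = quad_form M x + quad_form N x"
  by (simp add: quad_form_def matrix_vector_mult_add_rdistrib inner_add_right)

lemma quad_form_diff: "quad_form (M - N) x = quad_form M x - quad_form N x"
  by (simp add: quad_form_def matrix_vector_mult_diff_rdistrib inner_diff_right)

lemma quad_form_scaleR: "quad_form (c *\<^sub>R M) x = c * quad_form M x"
  by (simp add: quad_form_def scaleR_matrix_vector_assoc[symmetric])

lemma quad_form_scaleR_right: "quad_form M (c *\<^sub>R x) = c\<^sup>2 * quad_form M x"
  by (simp add: quad_form_def matrix_vector_mult_scaleR power2_eq_square)

lemma quad_form_zero_right [simp]: "quad_form M 0 = 0"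
  by (simp add: quad_form_def)

lemma matrix_vector_mult_neg_left: "(- M) *v x = - (M *v (x::real^_))"
  by (simp add: matrix_vector_mult_def vec_eq_iff sum_negf)

lemma inner_transpose_matrix_vector: "x \<bullet> (transpose C *v y) = (C *v x) \<bullet> (y::real^_)"
  by (metis dot_lmul_matrix inner_commute transpose_matrix_vector vector_transpose_matrix)

lemma sym_mat_inner: "sym_mat M \<Longrightarrow> x \<bullet> (M *v y) = (M *v x) \<bullet> y"
  by (metis inner_transpose_matrix_vector sym_mat_def)

lemma quad_form_congruence: "quad_form (transpose C ** M ** C) x = quad_form M (C *v x)"
  by (simp only: quad_form_def matrix_vector_mul_assoc[symmetric] inner_transpose_matrix_vector)

lemma sym_mat_add: "sym_mat M \<Longrightarrow> sym_mat N \<Longrightarrow> sym_mat (M + N)"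
  by (simp add: sym_mat_def transpose_def vec_eq_iff)

lemma sym_mat_congruence: "sym_mat M \<Longrightarrow> sym_mat (transpose C ** M ** C)"
  by (simp add: sym_mat_def matrix_transpose_mul matrix_mul_assoc)

lemma quad_form_add_right:
  assumes "sym_mat M"
  shows "quad_form M (x + y) = quad_form M x + 2 * (x \<bullet> (M *v y)) + quad_form M y"
proof -
  have "y \<bullet> (M *v x) = x \<bullet> (M *v y)"
    by (metis sym_mat_inner[OF assms] inner_commute)
  then show ?thesis
    by (simp add: quad_form_def matrix_vector_right_distrib inner_add_left inner_add_right)
qed

lemma quad_form_polarization:
  assumes "sym_mat M"
  shows "quad_form M (x + y) - quad_form M (x - y) = 4 * (x \<bullet> (M *v y))"
proof -
  have "y \<bullet> (M *v x) = x \<bullet> (M *v y)"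
    by (metis sym_mat_inner[OF assms] inner_commute)
  then show ?thesis
    by (simp add: quad_form_def matrix_vector_right_distrib matrix_vector_mult_diff_distrib
        inner_add_left inner_add_right inner_diff_left inner_diff_right)
qed

lemma abs_quad_form_le: "\<bar>quad_form M x\<bar> \<le> onorm ((*v) M) * (norm x)\<^sup>2"
proof -
  have "\<bar>quad_form M x\<bar> \<le> norm x * norm (M *v x)"
    unfolding quad_form_def by (rule Cauchy_Schwarz_ineq2)
  also have "\<dots> \<le> norm x * (onorm ((*v) M) * norm x)"
    by (intro mult_left_mono onorm matrix_vector_mul_bounded_linear) simp
  finally show ?thesis by (simp add: power2_eq_square algebra_simps)
qed

lemma quad_form_coercive:
  assumes pos: "\<And>x. x \<noteq> 0 \<Longrightarrow> 0 < quad_form M x"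
  shows "\<exists>l>0. \<forall>x. l * (norm x)\<^sup>2 \<le> quad_form M x"
proof -
  have "sphere (0::real^'n) 1 \<noteq> {}"
    by (metis empty_iff mem_sphere_0 norm_axis_1)
  moreover have "continuous_on (sphere 0 1) (quad_form M)"
    unfolding quad_form_def by (intro continuous_intros)
  ultimately obtain x0 where x0: "x0 \<in> sphere 0 1"
    "\<And>y. y \<in> sphere 0 1 \<Longrightarrow> quad_form M x0 \<le> quad_form M y"
    using continuous_attains_inf[OF compact_sphere] by blast
  have "quad_form M x0 * (norm x)\<^sup>2 \<le> quad_form M x" for x
  proof (cases "x = 0")
    case False
    have "quad_form M x0 \<le> quad_form M ((1 / norm x) *\<^sub>R x)"
      using False by (intro x0(2)) simp
    also have "\<dots> = quad_form M x / (norm x)\<^sup>2"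
      by (simp add: quad_form_scaleR_right power2_eq_square)
    finally show ?thesis using False by (simp add: field_simps)
  qed simp
  moreover have "0 < quad_form M x0"
    using x0(1) by (intro pos) auto
  ultimately show ?thesis by blast
qed

lemma quad_form_pos_if_coercive:
  assumes "0 < l" "\<And>x. l * (norm x)\<^sup>2 \<le> quad_form M x" "x \<noteq> 0"
  shows "0 < quad_form M x"
  using assms(2)[of x] mult_pos_pos[OF assms(1), of "(norm x)\<^sup>2"] assms(3) by simp

lemma pos_def_dominates:
  assumes "pos_def Y"
  shows "\<exists>c>0. \<forall>x. quad_form M x \<le> c * quad_form Y x"
proof -
  obtain l where l: "0 < l" "\<And>x. l * (norm x)\<^sup>2 \<le> quad_form Y x"
    using quad_form_coercive assms unfolding pos_def_iff_quad_form by blast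
  define C where "C = onorm ((*v) M) + 1"
  have C: "0 < C"
    unfolding C_def using onorm_pos_le[OF matrix_vector_mul_bounded_linear, of M] by linarith
  have "quad_form M x \<le> C / l * quad_form Y x" for x
  proof -
    have "quad_form M x \<le> onorm ((*v) M) * (norm x)\<^sup>2"
      using abs_quad_form_le by (rule abs_le_D1)
    also have "\<dots> \<le> C * (norm x)\<^sup>2"
      by (simp add: C_def mult_right_mono)
    also have "\<dots> = C / l * (l * (norm x)\<^sup>2)"
      using l(1) by simp
    also have "\<dots> \<le> C / l * quad_form Y x"
      using C l by (intro mult_left_mono l(2)) simp
    finally show ?thesis .
  qed
  with C l(1) show ?thesis by (metis divide_pos_pos)
qed

lemma matrix_inv_if_quad_form_pos:
  fixes M :: "real^'n^'n"
  assumes "\<And>x. x \<noteq> 0 \<Longrightarrow> 0 < quad_form M x"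
  shows "M ** matrix_inv M = mat 1" "matrix_inv M ** M = mat 1"
proof -
  have "inj ((*v) M)"
    unfolding linear_injective_0[OF matrix_vector_mul_linear]
    using assms by (metis quad_form_def inner_zero_right less_irrefl)
  then have "invertible M"
    using linear_inj_imp_surj[OF matrix_vector_mul_linear] by (simp add: invertible_eq_bij bij_def)
  then have "\<exists>N. M ** N = mat 1 \<and> N ** M = mat 1"
    by (simp add: invertible_def)
  then have "M ** matrix_inv M = mat 1 \<and> matrix_inv M ** M = mat 1"
    unfolding matrix_inv_def by (rule someI_ex)
  then show "M ** matrix_inv M = mat 1" "matrix_inv M ** M = mat 1"
    by simp_all
qed

definition lqr_gain ::
    "real^'n^'n \<Rightarrow> real^'m^'n \<Rightarrow> real^'m^'m \<Rightarrow> real^'n^'n \<Rightarrow> real^'n^'m" where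
  "lqr_gain A B R X = - (matrix_inv (R + transpose B ** X ** B) ** transpose B ** X ** A)"

lemma riccati_weight_pos_def:
  assumes "pos_semidef X" "pos_def R"
  shows "pos_def (R + transpose B ** X ** B)"
  using assms sym_mat_add[of R "transpose B ** X ** B"] sym_mat_congruence[of X B]
  unfolding pos_def_iff_quad_form pos_semidef_def
  by (simp add: quad_form_add quad_form_congruence add_pos_nonneg)

lemma completion_of_squares:
  fixes A :: "real^'n^'n" and B :: "real^'m^'n" and R :: "real^'m^'m"
  assumes X: "pos_semidef X" and R: "pos_def R"
  defines "M \<equiv> R + transpose B ** X ** B"
  shows "quad_form X (A *v x + B *v v) + quad_form R v
       = quad_form X (A *v x)
         - quad_form (transpose A ** X ** B ** matrix_inv M ** transpose B ** X ** A) x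
         + quad_form M (v - lqr_gain A B R X *v x)"
proof -
  define G where "G = matrix_inv M"
  define w where "w = transpose B *v (X *v (A *v x))"
  have symX: "sym_mat X" and M: "pos_def M"
    using X riccati_weight_pos_def[OF X R] by (auto simp: pos_semidef_def M_def)
  have MG: "M ** G = mat 1"
    using M by (simp add: pos_def_iff_quad_form matrix_inv_if_quad_form_pos G_def)
  have gain: "v - lqr_gain A B R X *v x = v + G *v w"
    by (simp add: lqr_gain_def M_def G_def w_def matrix_vector_mul_assoc matrix_mul_assoc
        matrix_vector_mult_neg_left)
  have cross: "(A *v x) \<bullet> (X *v (B *v v)) = w \<bullet> v"
  proof -
    have "(A *v x) \<bullet> (X *v (B *v v)) = (B *v v) \<bullet> (X *v (A *v x))"
      by (metis sym_mat_inner[OF symX] inner_commute)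
    also have "\<dots> = v \<bullet> w"
      by (simp only: w_def inner_transpose_matrix_vector)
    finally show ?thesis by (simp add: inner_commute)
  qed
  have "quad_form X (A *v x + B *v v) + quad_form R v
      = quad_form X (A *v x) + 2 * (w \<bullet> v) + quad_form M v"
    by (simp add: quad_form_add_right[OF symX] cross M_def quad_form_add quad_form_congruence)
  moreover have "quad_form (transpose A ** X ** B ** G ** transpose B ** X ** A) x = w \<bullet> (G *v w)"
  proof -
    have "quad_form (transpose A ** X ** B ** G ** transpose B ** X ** A) x
        = (X *v (A *v x)) \<bullet> (B *v (G *v w))"
      by (simp only: quad_form_def matrix_vector_mul_assoc[symmetric] inner_transpose_matrix_vector
          sym_mat_inner[OF symX] w_def)
    also have "\<dots> = w \<bullet> (G *v w)"
      by (metis inner_commute inner_transpose_matrix_vector w_def)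
    finally show ?thesis .
  qed
  moreover have "quad_form M (v + G *v w) = quad_form M v + 2 * (w \<bullet> v) + w \<bullet> (G *v w)"
  proof -
    have "sym_mat M"
      using M by (simp add: pos_def_iff_quad_form)
    then have "quad_form M (v + G *v w)
        = quad_form M v + 2 * (v \<bullet> (M *v (G *v w))) + quad_form M (G *v w)"
      by (rule quad_form_add_right)
    then show ?thesis
      by (simp add: quad_form_def matrix_vector_mul_assoc MG inner_commute)
  qed
  ultimately show ?thesis
    by (simp add: gain G_def)
qed

lemma lqr_gain_minimizes:
  fixes A :: "real^'n^'n" and B :: "real^'m^'n"
  assumes "pos_semidef X" "pos_def R"
  defines "K \<equiv> lqr_gain A B R X"
  shows "quad_form X (A *v x + B *v (K *v x)) + quad_form R (K *v x)
       \<le> quad_form X (A *v x + B *v v) + quad_form R v"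
  using completion_of_squares[OF assms(1,2), where A = A and B = B and x = x and v = "K *v x"]
    completion_of_squares[OF assms(1,2), where A = A and B = B and x = x and v = v]
    riccati_weight_pos_def[OF assms(1,2), THEN pos_def_imp_pos_semidef]
  by (simp add: K_def pos_semidef_def)

lemma mare_quad_form:
  assumes "mare A B Q R p X" "pos_semidef X" "pos_def R"
  defines "K \<equiv> lqr_gain A B R X"
  shows "quad_form X x = quad_form Q x + p * quad_form X (A *v x)
           + (1 - p) * (quad_form X (A *v x + B *v (K *v x)) + quad_form R (K *v x))"
proof -
  let ?T = "transpose A ** X ** B ** matrix_inv (R + transpose B ** X ** B) ** transpose B ** X ** A"
  have expansion: "quad_form X x = quad_form Q x + quad_form X (A *v x) - (1 - p) * quad_form ?T x"
    using arg_cong[OF assms(1)[unfolded mare_def], of "\<lambda>M. quad_form M x"]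
    by (simp only: quad_form_add quad_form_diff quad_form_scaleR quad_form_congruence)
  have cost: "quad_form X (A *v x + B *v (K *v x)) + quad_form R (K *v x)
      = quad_form X (A *v x) - quad_form ?T x"
    using completion_of_squares[OF assms(2,3), where A = A and B = B and x = x and v = "K *v x"]
    by (simp add: K_def)
  show ?thesis
    unfolding cost by (subst expansion) (simp add: algebra_simps)
qed

lemma mare_solution_ge:
  assumes "mare A B Q R p X" "pos_semidef X" "pos_def R" "0 \<le> p" "p \<le> 1"
  shows "quad_form Q x \<le> quad_form X x"
proof -
  have "0 \<le> quad_form X y" "0 \<le> quad_form R v" for y v
    using assms(2,3) pos_def_imp_pos_semidef by (auto simp: pos_semidef_def)
  then have "0 \<le> p * quad_form X (A *v x)"
      and "0 \<le> (1 - p) * (quad_form X (A *v x + B *v (lqr_gain A B R X *v x))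
                          + quad_form R (lqr_gain A B R X *v x))"
    using assms(4,5) by simp_all
  with mare_quad_form[OF assms(1-3), of x] show ?thesis
    by linarith
qed

lemma mare_quad_form_le:
  fixes A :: "real^'n^'n" and B :: "real^'m^'n"
  assumes "mare A B Q R p X" "pos_semidef X" "pos_def R" "p \<le> 1"
  shows "quad_form X x
       \<le> quad_form Q x + p * quad_form X (A *v x)
           + (1 - p) * (quad_form X (A *v x + B *v v) + quad_form R v)"
proof -
  let ?K = "lqr_gain A B R X"
  have "(1 - p) * (quad_form X (A *v x + B *v (?K *v x)) + quad_form R (?K *v x))
      \<le> (1 - p) * (quad_form X (A *v x + B *v v) + quad_form R v)"
    using lqr_gain_minimizes[OF assms(2,3)] assms(4) by (intro mult_left_mono) auto
  then show ?thesis
    using mare_quad_form[OF assms(1-3), of x] by linarith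
qed

lemma mare_quad_form_ge:
  fixes A :: "real^'n^'n" and B :: "real^'m^'n"
  assumes "mare A B Q R p' Y" "pos_semidef Y" "pos_def R" "p \<le> p'"
  defines "K \<equiv> lqr_gain A B R Y"
  shows "quad_form Q x + p * quad_form Y (A *v x)
           + (1 - p) * (quad_form Y (A *v x + B *v (K *v x)) + quad_form R (K *v x))
       \<le> quad_form Y x"
proof -
  let ?cost = "quad_form Y (A *v x + B *v (K *v x)) + quad_form R (K *v x)"
  have "?cost \<le> quad_form Y (A *v x)"
    using lqr_gain_minimizes[OF assms(2,3), where A = A and B = B and x = x and v = 0]
    by (simp add: K_def)
  then have "0 \<le> (p' - p) * (quad_form Y (A *v x) - ?cost)"
    using assms(4) by simp
  then show ?thesis
    using mare_quad_form[OF assms(1-3), of x] by (simp add: K_def algebra_simps)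
qed

lemma discounted_comparison_nonneg:
  fixes d y :: "'a \<Rightarrow> real"
  assumes "0 \<le> a" "0 \<le> b" "0 \<le> r" "r < 1" "0 \<le> c"
    and super: "\<And>x. a * d (f x) + b * d (g x) \<le> d x"
    and lyapunov: "\<And>x. a * y (f x) + b * y (g x) \<le> r * y x"
    and below: "\<And>x. - c * y x \<le> d x"
  shows "0 \<le> d x"
proof -
  have bound: "- (c * r ^ k) * y x \<le> d x" for k x
  proof (induction k arbitrary: x)
    case 0
    then show ?case using below by simp
  next
    case (Suc k)
    have "a * (- (c * r ^ k) * y (f x)) \<le> a * d (f x)"
      using Suc.IH assms(1) by (rule mult_left_mono)
    moreover have "b * (- (c * r ^ k) * y (g x)) \<le> b * d (g x)"
      using Suc.IH assms(2) by (rule mult_left_mono)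
    moreover have "c * r ^ k * (a * y (f x) + b * y (g x)) \<le> c * r ^ k * (r * y x)"
      using lyapunov assms(3,5) by (intro mult_left_mono) auto
    ultimately have "- (c * r ^ Suc k) * y x \<le> a * d (f x) + b * d (g x)"
      by (simp add: algebra_simps)
    also have "\<dots> \<le> d x"
      by (rule super)
    finally show ?case .
  qed
  have "(\<lambda>k. - (c * r ^ k) * y x) \<longlonglongrightarrow> - (c * 0) * y x"
    using assms(3,4) by (intro tendsto_intros LIMSEQ_power_zero) auto
  then show ?thesis
    using bound by (intro LIMSEQ_le_const2[where X = "\<lambda>k. - (c * r ^ k) * y x"]) auto
qed

lemma mare_solution_mono:
  fixes A :: "real^'n^'n" and B :: "real^'m^'n"
  assumes Q: "pos_def Q" and R: "pos_def R" and X: "pos_semidef X" and Y: "pos_def Y"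
    and mX: "mare A B Q R p X" and mY: "mare A B Q R p' Y"
    and p: "0 \<le> p" "p \<le> p'" "p' \<le> 1"
  shows "quad_form X x \<le> quad_form Y x"
proof -
  have Y': "pos_semidef Y"
    using Y by (rule pos_def_imp_pos_semidef)
  have Y_nonneg: "0 \<le> quad_form Y z" and Q_nonneg: "0 \<le> quad_form Q z"
    and R_nonneg: "0 \<le> quad_form R u" for z u
    using Y' Q R by (auto simp: pos_semidef_def dest: pos_def_imp_pos_semidef)
  define K where "K = lqr_gain A B R Y"
  define g where "g z = A *v z + B *v (K *v z)" for z
  define d where "d z = quad_form Y z - quad_form X z" for z
  have Y_ge: "quad_form Q z + p * quad_form Y (A *v z)
        + (1 - p) * (quad_form Y (g z) + quad_form R (K *v z)) \<le> quad_form Y z" for z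
    unfolding g_def K_def using mY Y' R p(2) by (rule mare_quad_form_ge)
  have super: "p * d (A *v z) + (1 - p) * d (g z) \<le> d z" for z
    using mare_quad_form_le[OF mX X R, where x = z and v = "K *v z"] Y_ge[of z] p
    by (simp add: d_def g_def algebra_simps)
  obtain c where c: "0 < c" "\<And>z. quad_form Y z \<le> c * quad_form Q z"
    using pos_def_dominates[OF Q] by blast
  have lyapunov: "p * quad_form Y (A *v z) + (1 - p) * quad_form Y (g z) \<le> c / (c + 1) * quad_form Y z"
    for z
  proof -
    have "quad_form Y z \<le> (c + 1) * quad_form Q z"
      using c(2)[of z] Q_nonneg[of z] by (simp add: distrib_right)
    then have "quad_form Y z - quad_form Q z \<le> c / (c + 1) * quad_form Y z"
      using c(1) by (simp add: field_simps)
    moreover have "0 \<le> (1 - p) * quad_form R (K *v z)"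
      using p R_nonneg by simp
    ultimately show ?thesis
      using Y_ge[of z] by (simp add: algebra_simps)
  qed
  obtain c' where c': "0 < c'" "\<And>z. quad_form X z \<le> c' * quad_form Y z"
    using pos_def_dominates[OF Y] by blast
  have below: "- c' * quad_form Y z \<le> d z" for z
    using c'(2)[of z] Y_nonneg[of z] by (simp add: d_def)
  have "0 \<le> d x"
    by (rule discounted_comparison_nonneg[OF _ _ _ _ _ super lyapunov below])
      (use p c c' in \<open>auto simp: field_simps\<close>)
  then show ?thesis
    by (simp add: d_def)
qed

lemma tendsto_matrix_mult [tendsto_intros]:
  fixes f :: "'a \<Rightarrow> real^'n^'m" and g :: "'a \<Rightarrow> real^'k^'n"
  assumes "(f \<longlongrightarrow> M) F" "(g \<longlongrightarrow> N) F"
  shows "((\<lambda>t. f t ** g t) \<longlongrightarrow> M ** N) F"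
  by (intro vec_tendstoI) (simp add: matrix_matrix_mult_def, intro tendsto_intros assms)

lemma tendsto_matrix_vector_mult [tendsto_intros]:
  fixes f :: "'a \<Rightarrow> real^'n^'m"
  assumes "(f \<longlongrightarrow> M) F" "(g \<longlongrightarrow> x) F"
  shows "((\<lambda>t. f t *v g t) \<longlongrightarrow> M *v x) F"
  by (intro vec_tendstoI) (simp add: matrix_vector_mult_def, intro tendsto_intros assms)

lemma tendsto_transpose [tendsto_intros]:
  fixes f :: "'a \<Rightarrow> real^'n^'m"
  assumes "(f \<longlongrightarrow> M) F"
  shows "((\<lambda>t. transpose (f t)) \<longlongrightarrow> transpose M) F"
  by (intro vec_tendstoI) (simp add: transpose_def, intro tendsto_intros assms)

lemma tendsto_quad_form [tendsto_intros]:
  "(f \<longlongrightarrow> M) F \<Longrightarrow> (g \<longlongrightarrow> x) F \<Longrightarrow> ((\<lambda>t. quad_form (f t) (g t)) \<longlongrightarrow> quad_form M x) F"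
  unfolding quad_form_def by (intro tendsto_intros)

lemma matrix_vector_mult_axis_nth: "(M *v axis j 1) $ i = M $ i $ j"
  by (simp add: matrix_vector_mult_def axis_def if_distrib cong: if_cong)

lemma norm_matrix_inv_le:
  assumes l: "0 < l" and coercive: "\<And>x. l * (norm x)\<^sup>2 \<le> quad_form M x"
  shows "l * norm (matrix_inv M *v y) \<le> norm y"
proof -
  define x where "x = matrix_inv M *v y"
  have "M ** matrix_inv M = mat 1"
    by (intro matrix_inv_if_quad_form_pos quad_form_pos_if_coercive[OF l coercive])
  then have Mx: "M *v x = y"
    by (simp add: x_def matrix_vector_mul_assoc)
  have "norm x * (l * norm x) \<le> norm x * norm y"
  proof -
    have "norm x * (l * norm x) \<le> x \<bullet> y"
      using coercive[of x] by (simp add: quad_form_def Mx power2_eq_square algebra_simps)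
    also have "\<dots> \<le> norm x * norm y"
      by (rule Cauchy_Schwarz_ineq2[THEN abs_le_D1])
    finally show ?thesis .
  qed
  then show ?thesis
    by (cases "x = 0") (simp_all add: x_def)
qed

lemma tendsto_matrix_inv:
  fixes f :: "'a \<Rightarrow> real^'m^'m"
  assumes lim: "(f \<longlongrightarrow> M) F" and l: "0 < l"
    and coercive: "\<forall>\<^sub>F t in F. \<forall>x. l * (norm x)\<^sup>2 \<le> quad_form (f t) x"
    and coercive_M: "\<And>x. l * (norm x)\<^sup>2 \<le> quad_form M x"
  shows "((\<lambda>t. matrix_inv (f t)) \<longlongrightarrow> matrix_inv M) F"
proof -
  have MI: "M ** matrix_inv M = mat 1"
    by (intro matrix_inv_if_quad_form_pos quad_form_pos_if_coercive[OF l coercive_M])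
  have columns: "((\<lambda>t. matrix_inv (f t) *v y) \<longlongrightarrow> matrix_inv M *v y) F" for y
  proof -
    define z where "z = matrix_inv M *v y"
    have "\<forall>\<^sub>F t in F. norm (matrix_inv (f t) *v y - matrix_inv M *v y) \<le> norm ((M - f t) *v z) / l"
      using coercive
    proof eventually_elim
      case (elim t)
      then have "matrix_inv (f t) ** f t = mat 1"
        using quad_form_pos_if_coercive[OF l] by (intro matrix_inv_if_quad_form_pos) blast
      then have "matrix_inv (f t) *v (f t *v z) = z"
        by (simp add: matrix_vector_mul_assoc)
      moreover have "M *v z = y"
        using MI by (simp add: z_def matrix_vector_mul_assoc)
      ultimately have "matrix_inv (f t) *v y - matrix_inv M *v y = matrix_inv (f t) *v ((M - f t) *v z)"
        by (simp add: z_def matrix_vector_mult_diff_rdistrib matrix_vector_mult_diff_distrib)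
      then show ?case
        using norm_matrix_inv_le[OF l, of "f t" "(M - f t) *v z"] elim l by (simp add: field_simps)
    qed
    moreover have "((\<lambda>t. norm ((M - f t) *v z) / l) \<longlongrightarrow> norm ((M - M) *v z) / l) F"
      using l by (intro tendsto_divide tendsto_norm tendsto_matrix_vector_mult tendsto_diff tendsto_const lim)
        simp_all
    then have "((\<lambda>t. norm ((M - f t) *v z) / l) \<longlongrightarrow> 0) F"
      by simp
    ultimately have "((\<lambda>t. matrix_inv (f t) *v y - matrix_inv M *v y) \<longlongrightarrow> 0) F"
      by (rule Lim_null_comparison)
    then show ?thesis
      by (rule Lim_null[THEN iffD2])
  qed
  show ?thesis
  proof (intro vec_tendstoI)
    fix i j
    show "((\<lambda>t. matrix_inv (f t) $ i $ j) \<longlongrightarrow> matrix_inv M $ i $ j) F"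
      using tendsto_vec_nth[OF columns[of "axis j 1"], of i] by (simp add: matrix_vector_mult_axis_nth)
  qed
qed

definition riccati_map :: "real^'n^'n \<Rightarrow> real^'m^'n \<Rightarrow> real^'n^'n \<Rightarrow> real^'m^'m \<Rightarrow> real
    \<Rightarrow> real^'n^'n \<Rightarrow> real^'n^'n" where
  "riccati_map A B Q R p X = Q + transpose A ** X ** A
     - (1 - p) *\<^sub>R (transpose A ** X ** B ** matrix_inv (R + transpose B ** X ** B)
                      ** transpose B ** X ** A)"

lemma mare_iff_riccati_map: "mare A B Q R p X \<longleftrightarrow> riccati_map A B Q R p X = X"
  by (auto simp: mare_def riccati_map_def)

lemma continuous_on_riccati_map:
  fixes A :: "real^'n^'n" and B :: "real^'m^'n"
  assumes R: "pos_def R"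
  shows "continuous_on (UNIV \<times> Collect pos_semidef) (\<lambda>z. riccati_map A B Q R (fst z) (snd z))"
  unfolding continuous_on_def
proof
  fix z :: "real \<times> (real^'n^'n)"
  assume z: "z \<in> UNIV \<times> Collect pos_semidef"
  obtain l where l: "0 < l" "\<And>x. l * (norm x)\<^sup>2 \<le> quad_form R x"
    using quad_form_coercive[of R] R unfolding pos_def_iff_quad_form by blast
  have coercive: "l * (norm x)\<^sup>2 \<le> quad_form (R + transpose B ** X ** B) x" if "pos_semidef X" for X x
    using l(2)[of x] that by (simp add: quad_form_add quad_form_congruence pos_semidef_def add_increasing2)
  let ?F = "at z within UNIV \<times> Collect pos_semidef"
  have "\<forall>\<^sub>F w in ?F. pos_semidef (snd w)"
    unfolding eventually_at_filter by (rule always_eventually) auto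
  then have "\<forall>\<^sub>F w in ?F. \<forall>x. l * (norm x)\<^sup>2 \<le> quad_form (R + transpose B ** snd w ** B) x"
    by eventually_elim (simp add: coercive)
  moreover have "((\<lambda>w. R + transpose B ** snd w ** B) \<longlongrightarrow> R + transpose B ** snd z ** B) ?F"
    by (intro tendsto_add tendsto_matrix_mult tendsto_const tendsto_snd tendsto_ident_at)
  ultimately have "((\<lambda>w. matrix_inv (R + transpose B ** snd w ** B))
      \<longlongrightarrow> matrix_inv (R + transpose B ** snd z ** B)) ?F"
    using z coercive by (intro tendsto_matrix_inv[OF _ l(1)]) auto
  then show "((\<lambda>w. riccati_map A B Q R (fst w) (snd w)) \<longlongrightarrow> riccati_map A B Q R (fst z) (snd z)) ?F"
    unfolding riccati_map_def
    by (intro tendsto_add tendsto_diff tendsto_scaleR tendsto_matrix_mult tendsto_const tendsto_fst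
        tendsto_snd tendsto_ident_at)
qed

definition loewner_interval :: "real^'n^'n \<Rightarrow> real^'n^'n \<Rightarrow> (real^'n^'n) set" where
  "loewner_interval L U =
     {X. sym_mat X \<and> (\<forall>x. quad_form L x \<le> quad_form X x \<and> quad_form X x \<le> quad_form U x)}"

lemma compact_loewner_interval:
  fixes L U :: "real^'n^'n"
  shows "compact (loewner_interval L U)"
proof -
  let ?S = "loewner_interval L U"
  have cont_quad_form: "continuous_on UNIV (\<lambda>X. quad_form X x)" for x :: "real^'n"
    unfolding continuous_on_def by (intro ballI tendsto_quad_form tendsto_ident_at tendsto_const)
  have cont_transpose: "continuous_on UNIV (transpose :: real^'n^'n \<Rightarrow> real^'n^'n)"
    unfolding continuous_on_def by (intro ballI tendsto_transpose tendsto_ident_at)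
  have "closed ?S"
    unfolding loewner_interval_def sym_mat_def
    by (intro closed_Collect_conj closed_Collect_all closed_Collect_eq closed_Collect_le
        cont_quad_form cont_transpose continuous_on_id continuous_on_const)
  define b where "b i j = (\<bar>quad_form L (axis i 1 + axis j 1)\<bar> + \<bar>quad_form U (axis i 1 + axis j 1)\<bar>
      + \<bar>quad_form L (axis i 1 - axis j 1)\<bar> + \<bar>quad_form U (axis i 1 - axis j 1)\<bar>) / 4" for i j :: 'n
  have "norm X \<le> (\<Sum>i\<in>UNIV. \<Sum>j\<in>UNIV. b i j)" if "X \<in> ?S" for X
  proof -
    have entry: "\<bar>X $ i $ j\<bar> \<le> b i j" for i j
    proof -
      have bound: "\<bar>quad_form X x\<bar> \<le> \<bar>quad_form L x\<bar> + \<bar>quad_form U x\<bar>" for x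
        using that unfolding loewner_interval_def by (smt (verit) mem_Collect_eq)
      have "4 * X $ i $ j = quad_form X (axis i 1 + axis j 1) - quad_form X (axis i 1 - axis j 1)"
        using quad_form_polarization[of X "axis i 1" "axis j 1"] that
        by (simp add: loewner_interval_def inner_axis' matrix_vector_mult_axis_nth)
      then have "4 * \<bar>X $ i $ j\<bar>
          = \<bar>quad_form X (axis i 1 + axis j 1) - quad_form X (axis i 1 - axis j 1)\<bar>"
        by (metis abs_mult abs_numeral)
      also have "\<dots> \<le> \<bar>quad_form X (axis i 1 + axis j 1)\<bar> + \<bar>quad_form X (axis i 1 - axis j 1)\<bar>"
        by (rule abs_triangle_ineq4)
      also have "\<dots> \<le> 4 * b i j"
        unfolding b_def using bound[of "axis i 1 + axis j 1"] bound[of "axis i 1 - axis j 1"] by simp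
      finally show ?thesis
        by simp
    qed
    have "norm X \<le> (\<Sum>i\<in>UNIV. norm (X $ i))"
      by (simp add: norm_vec_def L2_set_le_sum)
    also have "\<dots> \<le> (\<Sum>i\<in>UNIV. \<Sum>j\<in>UNIV. \<bar>X $ i $ j\<bar>)"
      by (intro sum_mono norm_le_l1_cart)
    also have "\<dots> \<le> (\<Sum>i\<in>UNIV. \<Sum>j\<in>UNIV. b i j)"
      by (intro sum_mono entry)
    finally show ?thesis .
  qed
  then have "bounded ?S"
    unfolding bounded_iff by blast
  with \<open>closed ?S\<close> show ?thesis
    by (simp add: compact_eq_bounded_closed)
qed

lemma pos_def_if_in_loewner_interval:
  assumes "pos_def L" "X \<in> loewner_interval L U"
  shows "pos_def X"
proof -
  have "0 < quad_form X x" if "x \<noteq> 0" for x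
  proof -
    have "0 < quad_form L x"
      using assms(1) that by (simp add: pos_def_iff_quad_form)
    also have "\<dots> \<le> quad_form X x"
      using assms(2) by (simp add: loewner_interval_def)
    finally show ?thesis .
  qed
  then show ?thesis
    using assms(2) by (simp add: pos_def_iff_quad_form loewner_interval_def)
qed

lemma mare_solution_in_loewner_interval:
  fixes A :: "real^'n^'n" and B :: "real^'m^'n"
  assumes Q: "pos_def Q" and R: "pos_def R" and X: "pos_def X" and Y: "pos_def Y"
    and mX: "mare A B Q R p X" and mY: "mare A B Q R p' Y" and p: "0 \<le> p" "p \<le> p'" "p' \<le> 1"
  shows "X \<in> loewner_interval Q Y"
proof -
  have "quad_form Q x \<le> quad_form X x" for x
    using p by (intro mare_solution_ge[OF mX pos_def_imp_pos_semidef[OF X] R]) auto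
  moreover have "quad_form X x \<le> quad_form Y x" for x
    by (rule mare_solution_mono[OF Q R pos_def_imp_pos_semidef[OF X] Y mX mY p])
  moreover have "sym_mat X"
    using X by (simp add: pos_def_iff_quad_form)
  ultimately show ?thesis
    by (simp add: loewner_interval_def)
qed

lemma continuous_on_mare_sol:
  fixes A :: "real^'n^'n" and B :: "real^'m^'n"
  assumes Q: "pos_def Q" and R: "pos_def R"
    and unique: "\<forall>p\<in>{0..<q_c}. \<exists>!X. pos_def X \<and> mare A B Q R p X"
    and "q_c \<le> 1" "b < q_c"
  shows "continuous_on {0..b} (mare_sol A B Q R)"
proof -
  let ?P = "mare_sol A B Q R"
  have sol: "pos_def (?P p) \<and> mare A B Q R p (?P p)" if "p \<in> {0..b}" for p
    using theI'[OF unique[rule_format, of p]] that assms(5) by (simp add: mare_sol_def)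
  have sol_unique: "X = ?P p" if "p \<in> {0..b}" "pos_def X" "mare A B Q R p X" for p X
    using the1_equality[OF unique[rule_format, of p]] that assms(5) by (simp add: mare_sol_def)
  define T where "T = loewner_interval Q (?P b)"
  have "compact T"
    unfolding T_def by (rule compact_loewner_interval)
  have T_pos_def: "pos_def X" if "X \<in> T" for X
    using pos_def_if_in_loewner_interval[OF Q] that by (simp add: T_def)
  have into: "?P \<in> {0..b} \<rightarrow> T"
  proof
    fix p assume p: "p \<in> {0..b}"
    then show "?P p \<in> T"
      using sol[OF p] sol[of b] assms(4,5) unfolding T_def
      by (intro mare_solution_in_loewner_interval[OF Q R, where p' = b]) auto
  qed
  have "(\<lambda>p. (p, ?P p)) ` {0..b}
      = {z \<in> {0..b} \<times> T. riccati_map A B Q R (fst z) (snd z) - snd z = 0}"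
    using into sol sol_unique T_pos_def by (auto simp: mare_iff_riccati_map)
  moreover have "closed {z \<in> {0..b} \<times> T. riccati_map A B Q R (fst z) (snd z) - snd z = 0}"
  proof (intro continuous_closed_preimage_constant continuous_on_diff continuous_on_snd continuous_on_id
      closed_Times closed_atLeastAtMost compact_imp_closed \<open>compact T\<close>)
    show "continuous_on ({0..b} \<times> T) (\<lambda>z. riccati_map A B Q R (fst z) (snd z))"
      by (rule continuous_on_subset[OF continuous_on_riccati_map[OF R]])
        (auto dest: T_pos_def pos_def_imp_pos_semidef)
  qed
  ultimately show ?thesis
    by (intro continuous_from_closed_graph[OF \<open>compact T\<close> into]) simp
qed

theorem lemma4:
  fixes A :: "real^'n^'n" and B :: "real^'m^'n" and Q :: "real^'n^'n" and R :: "real^'m^'m"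
    and q q_c :: real
  assumes "stabilizable A B"
    and "pos_def Q" and "pos_def R"
    and "0 < q" and "q < 1"
    and "q_c \<le> 1"
    and "\<forall>p\<in>{0..<q_c}. \<exists>!X. pos_def X \<and> mare A B Q R p X"
    and "q < q_c"
  shows "((\<lambda>qh. mare_sol A B Q R qh) \<longlongrightarrow> mare_sol A B Q R q) (at q within {0..<q_c})"
proof -
  obtain b where b: "q < b" "b < q_c"
    using \<open>q < q_c\<close> dense by blast
  have "continuous_on {0..b} (mare_sol A B Q R)"
    using assms(2,3,7,6) b(2) by (rule continuous_on_mare_sol)
  then have "(mare_sol A B Q R \<longlongrightarrow> mare_sol A B Q R q) (at q within {0..b})"
    using assms(4) b(1) by (simp add: continuous_on_def)
  moreover have "\<forall>\<^sub>F x in at q. x \<in> {0..b} \<longleftrightarrow> x \<in> {0..<q_c}"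
    using order_tendstoD(2)[OF tendsto_ident_at b(1)]
    by eventually_elim (use b in auto)
  ultimately show ?thesis
    by (rule Lim_transform_within_set)
qed

end
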